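(* Let $R$ be a $\star$-ring and $e\in P(R)$. If $a\in eRe$ is strongly $\star$-clean in the corner ring $eRe$, then $a$ is strongly $\star$-clean in $R$.
   Context: Rings are associative with identity. A $\star$-ring is a ring with a map $\star$ satisfying $(x+y)^\star=x^\star+y^\star$, $(xy)^\star=y^\star x^\star$, $(x^\star)^\star=x$. A projection is $p$ with $p^2=p=p^\star$; $P(R)$ is the set of projections, $U(R)$ the units. For $e\in P(R)$, $eRe$ is a $\star$-ring with identity $e$ and the restricted involution. An element $x$ of a $\star$-ring $S$ is strongly $\star$-clean if $x=u+p$ with $u\in U(S)$, $p\in P(S)$ and $up=pu$. *)

theory Defs
  imports Main
begin

definition star_ring :: "('a::ring_1 \<Rightarrow> 'a) \<Rightarrow> bool" where
  "star_ring st \<longleftrightarrow> (\<forall>x y. st (x + y) = st x + st y) \<and> (\<forall>x y. st (x * y) = st y * st x)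
     \<and> (\<forall>x. st (st x) = x)"

definition is_projection :: "('a::ring_1 \<Rightarrow> 'a) \<Rightarrow> 'a \<Rightarrow> bool" where
  "is_projection st p \<longleftrightarrow> p * p = p \<and> st p = p"

definition is_unit_ring :: "'a::ring_1 \<Rightarrow> bool" where
  "is_unit_ring u \<longleftrightarrow> (\<exists>v. u * v = 1 \<and> v * u = 1)"

text \<open>The corner ring eRe (as a subset of R, with identity e and restricted involution).\<close>
definition corner :: "'a::ring_1 \<Rightarrow> 'a set" where
  "corner e = {e * x * e | x. True}"

definition corner_unit :: "'a::ring_1 \<Rightarrow> 'a \<Rightarrow> bool" where
  "corner_unit e u \<longleftrightarrow> u \<in> corner e \<and> (\<exists>v\<in>corner e. u * v = e \<and> v * u = e)"

definition corner_projection :: "('a::ring_1 \<Rightarrow> 'a) \<Rightarrow> 'a \<Rightarrow> 'a \<Rightarrow> bool" where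
  "corner_projection st e p \<longleftrightarrow> p \<in> corner e \<and> is_projection st p"

definition strongly_star_clean :: "('a::ring_1 \<Rightarrow> 'a) \<Rightarrow> 'a \<Rightarrow> bool" where
  "strongly_star_clean st x \<longleftrightarrow>
     (\<exists>u p. is_unit_ring u \<and> is_projection st p \<and> u * p = p * u \<and> x = u + p)"

definition strongly_star_clean_corner :: "('a::ring_1 \<Rightarrow> 'a) \<Rightarrow> 'a \<Rightarrow> 'a \<Rightarrow> bool" where
  "strongly_star_clean_corner st e x \<longleftrightarrow>
     (\<exists>u p. corner_unit e u \<and> corner_projection st e p \<and> u * p = p * u \<and> x = u + p)"

end

theory Submission
  imports Defs
begin

text \<open>With \<open>f = 1 - e\<close>, every element of \<open>eRe\<close> is annihilated by \<open>f\<close> on both sides.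
  Hence if \<open>a = u + p\<close> in \<open>eRe\<close>, then \<open>a = (u - f) + (p + f)\<close>, where \<open>u - f\<close> is a unit of \<open>R\<close>
  (with inverse \<open>v - f\<close> for the corner inverse \<open>v\<close> of \<open>u\<close>), \<open>p + f\<close> is a projection of \<open>R\<close>, and
  the two summands still commute.\<close>

lemma star_ring_star_one:
  assumes "star_ring st"
  shows "st 1 = 1"
proof -
  have mul: "\<And>x y. st (x * y) = st y * st x" and inv: "\<And>x. st (st x) = x"
    using assms unfolding star_ring_def by auto
  have "st 1 = st 1 * st (st 1)" by (simp only: inv mult_1_right)
  also have "\<dots> = st (st 1 * 1)" by (simp only: mul)
  also have "\<dots> = 1" by (simp only: mult_1_right inv)
  finally show ?thesis .
qed

lemma star_ring_star_diff:
  assumes "star_ring st"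
  shows "st (x - y) = st x - st y"
proof -
  have "st x = st (x - y) + st y"
    using assms unfolding star_ring_def by (metis diff_add_cancel)
  then show ?thesis by (simp add: eq_diff_eq)
qed

lemma corner_mult_left:
  assumes "e * e = e" and "x \<in> corner e"
  shows "e * x = x"
  using assms unfolding corner_def by (auto simp: mult.assoc[symmetric])

lemma corner_mult_right:
  assumes "e * e = e" and "x \<in> corner e"
  shows "x * e = x"
  using assms unfolding corner_def by (auto simp: mult.assoc)

lemma corner_mult_complement_left:
  assumes "e * e = e" and "x \<in> corner e"
  shows "(1 - e) * x = 0"
  using corner_mult_left[OF assms] by (simp add: algebra_simps)

lemma corner_mult_complement_right:
  assumes "e * e = e" and "x \<in> corner e"
  shows "x * (1 - e) = 0"
  using corner_mult_right[OF assms] by (simp add: algebra_simps)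

lemmas corner_mult_complement = corner_mult_complement_left corner_mult_complement_right

lemma complement_idem:
  fixes e :: "'a::ring_1"
  assumes "e * e = e"
  shows "(1 - e) * (1 - e) = 1 - e"
  using assms by (simp add: algebra_simps)

lemma corner_unit_shift_unit:
  assumes "e * e = e" and "corner_unit e u"
  shows "is_unit_ring (u - (1 - e))"
proof -
  obtain v where uc: "u \<in> corner e" and vc: "v \<in> corner e" and "u * v = e" "v * u = e"
    using assms(2) unfolding corner_unit_def by blast
  with corner_mult_complement[OF assms(1) uc] corner_mult_complement[OF assms(1) vc]
    complement_idem[OF assms(1)]
  have "(u - (1 - e)) * (v - (1 - e)) = 1" "(v - (1 - e)) * (u - (1 - e)) = 1"
    by (simp_all add: algebra_simps)
  then show ?thesis unfolding is_unit_ring_def by blast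
qed

lemma corner_projection_shift_projection:
  assumes "star_ring st" and "is_projection st e" and "corner_projection st e p"
  shows "is_projection st (p + (1 - e))"
proof -
  have ee: "e * e = e" and se: "st e = e" using assms(2) unfolding is_projection_def by auto
  have pc: "p \<in> corner e" and pp: "p * p = p" and sp: "st p = p"
    using assms(3) unfolding corner_projection_def is_projection_def by auto
  have "(p + (1 - e)) * (p + (1 - e)) = p + (1 - e)"
    using corner_mult_complement[OF ee pc] complement_idem[OF ee] pp by (simp add: algebra_simps)
  moreover have "st (p + (1 - e)) = p + (1 - e)"
    using assms(1) sp se unfolding star_ring_def
    by (simp add: star_ring_star_diff[OF assms(1)] star_ring_star_one[OF assms(1)])
  ultimately show ?thesis unfolding is_projection_def by blast
qed

lemma corner_commute_shift:
  assumes "e * e = e" and "u \<in> corner e" and "p \<in> corner e" and "u * p = p * u"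
  shows "(u - (1 - e)) * (p + (1 - e)) = (p + (1 - e)) * (u - (1 - e))"
  using corner_mult_complement[OF assms(1,2)] corner_mult_complement[OF assms(1,3)] assms(4)
  by (simp add: algebra_simps)

theorem proposition4p13:
  fixes st :: "'a::ring_1 \<Rightarrow> 'a" and e a :: 'a
  assumes "star_ring st"
    and "is_projection st e"
    and "a \<in> corner e"
    and "strongly_star_clean_corner st e a"
  shows "strongly_star_clean st a"
proof -
  have ee: "e * e = e" using assms(2) unfolding is_projection_def by simp
  obtain u p where u: "corner_unit e u" and p: "corner_projection st e p"
    and commute: "u * p = p * u" and a: "a = u + p"
    using assms(4) unfolding strongly_star_clean_corner_def by blast
  have "u \<in> corner e" and "p \<in> corner e"
    using u p unfolding corner_unit_def corner_projection_def by auto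
  then have "(u - (1 - e)) * (p + (1 - e)) = (p + (1 - e)) * (u - (1 - e))"
    using corner_commute_shift[OF ee _ _ commute] by blast
  moreover have "a = (u - (1 - e)) + (p + (1 - e))" using a by simp
  ultimately show ?thesis
    unfolding strongly_star_clean_def
    using corner_unit_shift_unit[OF ee u] corner_projection_shift_projection[OF assms(1,2) p]
    by blast
qed

end
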